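(* Let $M$ be a compact Riemannian manifold, $f\colon M\to M$ a $C^1$ map, and $\phi\colon\overleftarrow M_f\to\mathbb R^n$ a $d_1$-continuous function with a $d_1$-continuous extension $\tilde\phi\colon M^{\mathbb Z}\to\mathbb R^n$. Let $\rho\in C^\infty(\mathbb R)$ be a non-negative bump function with support in $(-1,1)$ and $\rho(0)>0$, let $\mu$ be a Lebesgue (smooth) probability measure on $M$ and $\tilde\mu=\bigotimes_{\mathbb Z}\mu$ the product probability on $M^{\mathbb Z}$. For $r>0$ and a bounded measurable $g\colon M^{\mathbb Z}\to\mathbb R^n$ set $g_r(\underline x)=\int_{M^{\mathbb Z}}g(\underline y)\,\rho\!\left(\frac{d_1(\underline x,\underline y)}{r}\right)d\tilde\mu(\underline y)$ for $\underline x\in\overleftarrow M_f$, and let $1\!\!1$ denote the constant function $1$ on $M^{\mathbb Z}$. Then for every $r>0$: (i) $\tilde\phi_r$ and $\tilde\phi_r/1\!\!1_r$ are well defined on $\overleftarrow M_f$ (in particular $1\!\!1_r>0$); (ii) $\tilde\phi_r$ is $d_1$-continuous and $d_\infty$-Lipschitz; (iii) $\sup_{\underline x\in\overleftarrow M_f}|\tilde\phi_r(\underline x)/1\!\!1_r(\underline x)-\tilde\phi(\underline x)|\to0$ as $r\to0$; (iv) the support of $\tilde\phi_r$ is contained in the $r$-neighborhood (for $d_1$) of the support of $\tilde\phi$.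
   Context: $\overleftarrow M_f=\{(x_n)_{n\in\mathbb Z}\in M^{\mathbb Z}: f(x_n)=x_{n+1}\}$; $d_1(\underline x,\underline y)=\sum_{n\in\mathbb Z}2^{-|n|}d(x_n,y_n)$ (which metrizes the product topology on $M^{\mathbb Z}$), $d_\infty(\underline x,\underline y)=\sup_n d(x_n,y_n)$. *)

theory Defs
  imports "HOL-Analysis.Analysis" "HOL-Probability.Probability"
begin

definition orbits :: "('a \<Rightarrow> 'a) \<Rightarrow> (int \<Rightarrow> 'a) set" where
  "orbits f = {x. \<forall>n. f (x n) = x (n + 1)}"

definition d1 :: "(int \<Rightarrow> 'a::metric_space) \<Rightarrow> (int \<Rightarrow> 'a) \<Rightarrow> real" where
  "d1 x y = (\<Sum>\<^sub>\<infinity>n. (1/2) ^ nat \<bar>n\<bar> * dist (x n) (y n))"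

definition dinf :: "(int \<Rightarrow> 'a::metric_space) \<Rightarrow> (int \<Rightarrow> 'a) \<Rightarrow> real" where
  "dinf x y = (SUP n. dist (x n) (y n))"

definition d1_continuous_on :: "(int \<Rightarrow> 'a::metric_space) set \<Rightarrow> ((int \<Rightarrow> 'a) \<Rightarrow> 'b::real_normed_vector) \<Rightarrow> bool" where
  "d1_continuous_on S g \<longleftrightarrow>
     (\<forall>x\<in>S. \<forall>e>0. \<exists>d>0. \<forall>y\<in>S. d1 x y < d \<longrightarrow> norm (g y - g x) < e)"

definition d1_support :: "((int \<Rightarrow> 'a::metric_space) \<Rightarrow> 'b::zero) \<Rightarrow> (int \<Rightarrow> 'a) set \<Rightarrow> (int \<Rightarrow> 'a) set" where
  "d1_support g S = {x\<in>S. \<forall>e>0. \<exists>y\<in>S. g y \<noteq> 0 \<and> d1 x y < e}"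

definition d1_nbhd :: "(int \<Rightarrow> 'a::metric_space) set \<Rightarrow> real \<Rightarrow> (int \<Rightarrow> 'a) set" where
  "d1_nbhd A r = {x. \<exists>y\<in>A. d1 x y < r}"

definition smooth_real :: "(real \<Rightarrow> real) \<Rightarrow> bool" where
  "smooth_real \<rho> \<longleftrightarrow> (\<exists>D. D 0 = \<rho> \<and> (\<forall>k x. (D k has_real_derivative D (Suc k) x) (at x)))"

definition smoothing ::
  "'a::metric_space measure \<Rightarrow> (real \<Rightarrow> real) \<Rightarrow> real \<Rightarrow> ((int \<Rightarrow> 'a) \<Rightarrow> 'b::{banach,second_countable_topology})
     \<Rightarrow> (int \<Rightarrow> 'a) \<Rightarrow> 'b" where
  "smoothing \<mu> \<rho> r g x = (\<integral>y. \<rho> (d1 x y / r) *\<^sub>R g y \<partial>(PiM UNIV (\<lambda>_. \<mu>)))"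

end

theory Submission
  imports Defs
begin

text \<open>
  The kernel \<open>y \<mapsto> \<rho> (d1 x y / r)\<close> depends \<open>K/r\<close>-Lipschitzly on \<open>x\<close> with respect to \<open>d1\<close>,
  since \<open>\<rho>\<close> is \<open>K\<close>-Lipschitz (being smooth with compact support) and \<open>\<lambda>x. d1 x y\<close> is 1-Lipschitz.
  Integrating against the bounded function \<open>\<phi>t\<close> therefore makes the smoothing \<open>d1\<close>-Lipschitz,
  hence \<open>d1\<close>-continuous, and \<open>dinf\<close>-Lipschitz because \<open>d1 \<le> (\<Sum>n. (1/2) ^ \<bar>n\<bar>) * dinf\<close>.
  The normalizer is positive because the kernel exceeds \<open>\<rho> 0 / 2\<close> on a cylinder neighbourhood
  of \<open>x\<close>, which has positive product measure as \<open>\<mu>\<close> charges every ball. The normalized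
  smoothing is an average of \<open>\<phi>t\<close> over the \<open>d1\<close>-ball of radius \<open>r\<close>, so it is uniformly
  close to \<open>\<phi>t\<close> once \<open>r\<close> is below a modulus of uniform \<open>d1\<close>-continuity of \<open>\<phi>t\<close>; such a
  modulus exists because \<open>d1\<close> is continuous for the product topology, in which the space of
  sequences is compact. Finally, the support of \<open>\<rho>\<close> lies in some \<open>[-c, c]\<close> with \<open>c < 1\<close>, and
  the triangle inequality gives the support statement.
\<close>

section \<open>The metric \<open>d1\<close> on bi-infinite sequences\<close>

definition d1_weight :: "int \<Rightarrow> real" where
  "d1_weight n = (1/2) ^ nat \<bar>n\<bar>"

lemma d1_weight_pos: "0 < d1_weight n"
  by (simp add: d1_weight_def)

lemma d1_weight_nonneg [simp]: "0 \<le> d1_weight n"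
  using d1_weight_pos less_imp_le by blast

lemma sum_d1_weight_symmetric: "sum d1_weight {-int N..int N} = 3 - 2 * (1/2) ^ N"
proof (induction N)
  case 0
  then show ?case by (simp add: d1_weight_def)
next
  case (Suc N)
  have "{-int (Suc N)..int (Suc N)} = insert (-(int N + 1)) (insert (int N + 1) {-int N..int N})"
    by auto
  moreover have "d1_weight (-(int N + 1)) = (1/2) ^ Suc N" "d1_weight (int N + 1) = (1/2) ^ Suc N"
    by (simp_all add: d1_weight_def nat_add_distrib)
  ultimately show ?case
    using Suc by simp
qed

lemma d1_weight_summable: "d1_weight summable_on UNIV"
proof (rule nonneg_bdd_above_summable_on)
  show "bdd_above (sum d1_weight ` {F. F \<subseteq> UNIV \<and> finite F})"
  proof (rule bdd_aboveI2)
    fix F :: "int set"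
    assume "F \<in> {F. F \<subseteq> UNIV \<and> finite F}"
    then have "F \<subseteq> {-int (nat (\<Sum>n\<in>F. \<bar>n\<bar>))..int (nat (\<Sum>n\<in>F. \<bar>n\<bar>))}" (is "F \<subseteq> ?I")
      using member_le_sum[of _ F abs] by (force simp: abs_le_iff)
    then have "sum d1_weight F \<le> sum d1_weight ?I"
      by (intro sum_mono2) simp_all
    also have "\<dots> \<le> 3"
      unfolding sum_d1_weight_symmetric by simp
    finally show "sum d1_weight F \<le> 3" .
  qed
qed simp

lemma d1_eq_infsum: "d1 x y = (\<Sum>\<^sub>\<infinity>n. d1_weight n * dist (x n) (y n))"
  by (simp add: d1_def d1_weight_def)

lemma d1_nonneg: "0 \<le> d1 x y"
  unfolding d1_eq_infsum by (rule infsum_nonneg) simp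

lemma d1_commute: "d1 x y = d1 y x"
  unfolding d1_eq_infsum by (simp add: dist_commute)

lemma d1_self [simp]: "d1 x x = 0"
  unfolding d1_eq_infsum by simp

lemma d1_continuous_on_if_d1_lipschitz:
  fixes g :: "(int \<Rightarrow> 'a::metric_space) \<Rightarrow> 'b::real_normed_vector"
  assumes "\<And>x y. norm (g x - g y) \<le> C * d1 x y"
  shows "d1_continuous_on S g"
  unfolding d1_continuous_on_def
proof (intro ballI allI impI)
  fix x and e :: real
  assume "e > 0"
  have "norm (g y - g x) < e" if "d1 x y < e / (\<bar>C\<bar> + 1)" for y
  proof -
    have "norm (g y - g x) \<le> C * d1 x y"
      using assms[of y x] by (simp add: d1_commute)
    also have "\<dots> \<le> \<bar>C\<bar> * d1 x y"
      by (rule mult_right_mono[OF abs_ge_self d1_nonneg])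
    also have "\<dots> \<le> \<bar>C\<bar> * (e / (\<bar>C\<bar> + 1))"
      using that by (intro mult_left_mono) auto
    also have "\<dots> < e"
      using \<open>e > 0\<close> by (simp add: field_simps)
    finally show ?thesis .
  qed
  then show "\<exists>d>0. \<forall>y\<in>S. d1 x y < d \<longrightarrow> norm (g y - g x) < e"
    using \<open>e > 0\<close> by (intro exI[of _ "e / (\<bar>C\<bar> + 1)"]) auto
qed

context
  assumes bounded_UNIV: "bounded (UNIV :: 'a::metric_space set)"
begin

lemma d1_summable: "(\<lambda>n. d1_weight n * dist (x n) (y n :: 'a)) summable_on A"
proof -
  obtain D where D: "\<And>a b::'a. dist a b \<le> D"
    using bounded_UNIV unfolding bounded_two_points by auto
  have "(\<lambda>n. D * d1_weight n) summable_on UNIV"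
    by (rule summable_on_cmult_right[OF d1_weight_summable])
  then have "(\<lambda>n. d1_weight n * dist (x n) (y n)) summable_on UNIV"
    by (rule summable_on_comparison_test)
       (simp_all add: D mult.commute[of D] mult_left_mono)
  then show ?thesis
    by (rule summable_on_subset) simp
qed

lemma d1_triangle: "d1 x z \<le> d1 x y + d1 y (z :: int \<Rightarrow> 'a)"
proof -
  have "d1 x z \<le> (\<Sum>\<^sub>\<infinity>n. d1_weight n * dist (x n) (y n) + d1_weight n * dist (y n) (z n))"
    unfolding d1_eq_infsum
    by (rule infsum_mono[OF d1_summable summable_on_add[OF d1_summable d1_summable]])
       (simp add: distrib_left[symmetric] mult_left_mono dist_triangle)
  also have "\<dots> = d1 x y + d1 y z"
    unfolding d1_eq_infsum by (rule infsum_add[OF d1_summable d1_summable])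
  finally show ?thesis .
qed

lemma abs_d1_diff_le: "\<bar>d1 x z - d1 y z\<bar> \<le> d1 x (y :: int \<Rightarrow> 'a)"
  using d1_triangle[of x z y] d1_triangle[of y z x] d1_commute[of x y] by linarith

lemma weighted_dist_le_d1: "d1_weight n * dist (x n) (y n) \<le> d1 x (y :: int \<Rightarrow> 'a)"
  using finite_sum_le_infsum[OF d1_summable, of "{n}" UNIV x y]
  unfolding d1_eq_infsum by simp

lemma d1_eq_0_iff: "d1 x y = 0 \<longleftrightarrow> x = (y :: int \<Rightarrow> 'a)"
proof
  assume "d1 x y = 0"
  then have "d1_weight n * dist (x n) (y n) \<le> 0" for n
    using weighted_dist_le_d1[of n x y] by simp
  then show "x = y"
    by (metis d1_weight_pos ext mult_le_0_iff not_less zero_le_dist dist_le_zero_iff)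
qed simp

lemma d1_le_dinf: "d1 x y \<le> infsum d1_weight UNIV * dinf x (y :: int \<Rightarrow> 'a)"
proof -
  obtain D where "\<And>a b::'a. dist a b \<le> D"
    using bounded_UNIV unfolding bounded_two_points by auto
  then have "bdd_above (range (\<lambda>n. dist (x n) (y n)))"
    by (intro bdd_aboveI2)
  then have "dist (x n) (y n) \<le> dinf x y" for n
    unfolding dinf_def by (rule cSUP_upper[rotated]) simp
  then have "d1 x y \<le> (\<Sum>\<^sub>\<infinity>n. dinf x y * d1_weight n)"
    unfolding d1_eq_infsum
    by (intro infsum_mono[OF d1_summable summable_on_cmult_right[OF d1_weight_summable]])
       (simp add: mult.commute[of "dinf x y"] mult_left_mono)
  then show ?thesis
    by (simp add: infsum_cmult_left' ac_simps)
qed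

lemma dinf_lipschitz_if_d1_lipschitz:
  fixes g :: "(int \<Rightarrow> 'a) \<Rightarrow> 'b::real_normed_vector"
  assumes "\<And>x y. norm (g x - g y) \<le> C * d1 x y"
  shows "norm (g x - g y) \<le> \<bar>C\<bar> * infsum d1_weight UNIV * dinf x y"
proof -
  have "norm (g x - g y) \<le> \<bar>C\<bar> * d1 x y"
    using assms[of x y] mult_right_mono[OF abs_ge_self d1_nonneg] by (rule order_trans)
  also have "\<dots> \<le> \<bar>C\<bar> * (infsum d1_weight UNIV * dinf x y)"
    by (rule mult_left_mono[OF d1_le_dinf abs_ge_zero])
  finally show ?thesis
    by (simp add: mult.assoc)
qed

lemma d1_less_if_close_on_finite:
  assumes "e > 0"
  obtains I \<delta> where "finite I" "\<delta> > 0"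
    "\<And>x y :: int \<Rightarrow> 'a. (\<forall>n\<in>I. dist (x n) (y n) < \<delta>) \<Longrightarrow> d1 x y < e"
proof -
  obtain D where D: "\<And>a b::'a. dist a b \<le> D"
    using bounded_UNIV unfolding bounded_two_points by auto
  then have "D \<ge> 0"
    using zero_le_dist order_trans by blast
  define W where "W = infsum d1_weight UNIV"
  have "W \<ge> 0"
    unfolding W_def by (rule infsum_nonneg) simp
  obtain I where I: "finite I" "dist (sum d1_weight I) W \<le> e / (2 * (D + 1))"
    using infsum_finite_approximation[OF d1_weight_summable, of "e / (2 * (D + 1))"] \<open>e > 0\<close> \<open>D \<ge> 0\<close>
    unfolding W_def by auto
  have tail: "infsum d1_weight (- I) \<le> e / (2 * (D + 1))"
    using I infsum_Diff[OF d1_weight_summable, of I] by (simp add: Compl_eq_Diff_UNIV W_def dist_real_def)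
  define \<delta> where "\<delta> = e / (2 * (W + 1))"
  have "\<delta> > 0"
    using \<open>e > 0\<close> \<open>W \<ge> 0\<close> by (simp add: \<delta>_def)
  have "d1 x y < e" if close: "\<forall>n\<in>I. dist (x n) (y n) < \<delta>" for x y :: "int \<Rightarrow> 'a"
  proof -
    let ?g = "\<lambda>n. d1_weight n * dist (x n) (y n)"
    have "sum ?g I \<le> sum (\<lambda>n. \<delta> * d1_weight n) I"
      using close by (intro sum_mono) (simp add: mult.commute[of \<delta>] mult_left_mono less_imp_le)
    also have "\<dots> = \<delta> * sum d1_weight I"
      by (simp add: sum_distrib_left)
    also have "\<dots> \<le> \<delta> * W"
      using finite_sum_le_infsum[OF d1_weight_summable I(1)] \<open>\<delta> > 0\<close>
      by (intro mult_left_mono) (simp_all add: W_def)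
    also have "\<dots> < e / 2"
      using \<open>e > 0\<close> \<open>W \<ge> 0\<close> by (simp add: \<delta>_def field_simps)
    finally have head: "sum ?g I < e / 2" .
    have "infsum ?g (- I) \<le> infsum (\<lambda>n. D * d1_weight n) (- I)"
      by (rule infsum_mono[OF d1_summable summable_on_cmult_right[OF summable_on_subset[OF d1_weight_summable]]])
         (simp_all add: D mult.commute[of D] mult_left_mono)
    also have "\<dots> \<le> D * (e / (2 * (D + 1)))"
      unfolding infsum_cmult_right' using tail \<open>D \<ge> 0\<close> by (rule mult_left_mono)
    also have "\<dots> < e / 2"
      using \<open>e > 0\<close> \<open>D \<ge> 0\<close> by (simp add: field_simps)
    finally have "infsum ?g (- I) < e / 2" .
    moreover have "d1 x y = sum ?g I + infsum ?g (- I)"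
      using infsum_Diff[OF d1_summable[of x y UNIV], of I] I(1)
      by (simp add: d1_eq_infsum Compl_eq_Diff_UNIV)
    ultimately show ?thesis
      using head by linarith
  qed
  then show thesis
    using I(1) \<open>\<delta> > 0\<close> that by blast
qed

lemma tendsto_d1_zero:
  assumes "(X \<longlongrightarrow> x) F"
  shows "((\<lambda>k. d1 (X k) (x :: int \<Rightarrow> 'a)) \<longlongrightarrow> 0) F"
proof (rule tendstoI)
  fix e :: real
  assume "e > 0"
  then obtain I \<delta> where I: "finite I" "\<delta> > 0"
    and small: "\<And>x y :: int \<Rightarrow> 'a. (\<forall>n\<in>I. dist (x n) (y n) < \<delta>) \<Longrightarrow> d1 x y < e"
    using d1_less_if_close_on_finite by metis
  have "((\<lambda>k. X k n) \<longlongrightarrow> x n) F" for n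
    using continuous_on_product_coordinates assms
    by (rule continuous_on_tendsto_compose) simp_all
  then have "\<forall>\<^sub>F k in F. \<forall>n\<in>I. dist (X k n) (x n) < \<delta>"
    using I by (intro eventually_ball_finite ballI tendstoD) auto
  then show "\<forall>\<^sub>F k in F. dist (d1 (X k) x) 0 < e"
    by eventually_elim (simp add: small d1_nonneg)
qed

lemma continuous_on_d1: "continuous_on UNIV (\<lambda>p. d1 (fst p) (snd p :: int \<Rightarrow> 'a))"
proof (rule continuous_at_imp_continuous_on, intro ballI)
  fix p :: "(int \<Rightarrow> 'a) \<times> (int \<Rightarrow> 'a)"
  let ?err = "\<lambda>q. d1 (fst q) (fst p) + d1 (snd q) (snd p)"
  have "((\<lambda>q. fst q) \<longlongrightarrow> fst p) (at p)" "((\<lambda>q. snd q) \<longlongrightarrow> snd p) (at p)"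
    by (auto intro: tendsto_fst tendsto_snd)
  from tendsto_add[OF this[THEN tendsto_d1_zero]]
  have err: "(?err \<longlongrightarrow> 0) (at p)"
    by simp
  have bound: "norm (d1 (fst q) (snd q) - d1 (fst p) (snd p)) \<le> ?err q" for q
    using d1_triangle[of "fst q" "snd q" "fst p"] d1_triangle[of "fst p" "snd q" "snd p"]
      d1_triangle[of "fst p" "snd p" "fst q"] d1_triangle[of "fst q" "snd p" "snd q"]
      d1_commute[of "fst p" "fst q"] d1_commute[of "snd p" "snd q"]
    unfolding real_norm_def by linarith
  have "((\<lambda>q. d1 (fst q) (snd q) - d1 (fst p) (snd p)) \<longlongrightarrow> 0) (at p)"
    using always_eventually[OF allI[OF bound]] err by (rule Lim_null_comparison)
  then show "isCont (\<lambda>q. d1 (fst q) (snd q)) p"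
    unfolding isCont_def LIM_zero_iff .
qed

lemma continuous_on_if_d1_continuous:
  fixes g :: "(int \<Rightarrow> 'a) \<Rightarrow> 'b::real_normed_vector"
  assumes "d1_continuous_on UNIV g"
  shows "continuous_on UNIV g"
proof (rule continuous_at_imp_continuous_on, intro ballI)
  fix x :: "int \<Rightarrow> 'a"
  show "isCont g x"
    unfolding isCont_def
  proof (rule tendstoI)
    fix e :: real
    assume "e > 0"
    then obtain \<delta> where "\<delta> > 0" and \<delta>: "\<And>y. d1 x y < \<delta> \<Longrightarrow> norm (g y - g x) < e"
      using assms unfolding d1_continuous_on_def by blast
    have "\<forall>\<^sub>F y in at x. d1 y x < \<delta>"
      using tendsto_d1_zero[OF tendsto_ident_at] \<open>\<delta> > 0\<close> by (rule order_tendstoD)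
    then show "\<forall>\<^sub>F y in at x. dist (g y) (g x) < e"
      by eventually_elim (simp add: \<delta> d1_commute dist_norm)
  qed
qed

end

section \<open>Compactness of the sequence space\<close>

lemma compact_UNIV_fun:
  assumes "compact (UNIV :: 'a::topological_space set)"
  shows "compact (UNIV :: ('i \<Rightarrow> 'a) set)"
proof -
  have "compact_space (euclidean :: 'a topology)"
    using assms by (simp add: compact_space_def)
  then have "compact_space (product_topology (\<lambda>_::'i. euclidean :: 'a topology) UNIV)"
    by (simp add: compact_space_product_topology)
  then show ?thesis
    by (simp add: euclidean_product_topology compact_space_def)
qed

text \<open>The \<open>\<delta>\<close> is the minimum of \<open>d\<close> over the compact set of pairs whose \<open>g\<close>-values are \<open>e\<close> apart.\<close>

lemma uniform_continuity_wrt_separating_function: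
  fixes d :: "'a::topological_space \<Rightarrow> 'a \<Rightarrow> real" and g :: "'a \<Rightarrow> 'b::metric_space"
  assumes "compact (UNIV :: 'a set)" and "continuous_on UNIV (\<lambda>p. d (fst p) (snd p))"
    and "\<And>x y. 0 \<le> d x y" and "\<And>x y. d x y = 0 \<Longrightarrow> x = y"
    and "continuous_on UNIV g" and "e > 0"
  shows "\<exists>\<delta>>0. \<forall>x y. d x y < \<delta> \<longrightarrow> dist (g x) (g y) < e"
proof -
  define K where "K = {p. e \<le> dist (g (fst p)) (g (snd p))}"
  have "continuous_on UNIV (\<lambda>p. g (fst p))" "continuous_on UNIV (\<lambda>p. g (snd p))"
    by (rule continuous_on_compose2[OF assms(5)], auto intro: continuous_intros)+
  then have "closed K"
    unfolding K_def by (intro closed_Collect_le continuous_on_dist continuous_intros)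
  then have "compact K"
    using compact_Int_closed[OF compact_Times[OF assms(1) assms(1)]] by simp
  show ?thesis
  proof (cases "K = {}")
    case True
    then show ?thesis
      unfolding K_def by (auto intro!: exI[of _ 1] simp: not_le)
  next
    case False
    then obtain p where "p \<in> K" and p_min: "\<And>q. q \<in> K \<Longrightarrow> d (fst p) (snd p) \<le> d (fst q) (snd q)"
      using continuous_attains_inf[OF \<open>compact K\<close> False continuous_on_subset[OF assms(2)]] by blast
    have "d (fst p) (snd p) \<noteq> 0"
      using \<open>p \<in> K\<close> assms(4,6) unfolding K_def by force
    then have "d (fst p) (snd p) > 0"
      using assms(3) by (simp add: order_le_neq_trans)
    moreover have "dist (g x) (g y) < e" if "d x y < d (fst p) (snd p)" for x y
      using p_min[of "(x, y)"] that unfolding K_def by force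
    ultimately show ?thesis
      by blast
  qed
qed

lemma orbits_nonempty:
  fixes f :: "'a::t2_space \<Rightarrow> 'a"
  assumes "compact (UNIV :: 'a set)" and "continuous_on UNIV f"
  shows "orbits f \<noteq> {}"
proof -
  define C where "C N = {x :: int \<Rightarrow> 'a. \<forall>n\<ge>-int N. f (x n) = x (n + 1)}" for N :: nat
  have closed: "closed (C N)" for N
  proof -
    have "C N = (\<Inter>n\<in>{-int N..}. {x. f (x n) = x (n + 1)})"
      unfolding C_def by auto
    moreover have "closed {x :: int \<Rightarrow> 'a. f (x n) = x (n + 1)}" for n
      by (intro closed_Collect_eq continuous_on_compose2[OF assms(2) continuous_on_product_coordinates])
        simp_all
    ultimately show ?thesis
      by auto
  qed
  have nonempty: "C N \<noteq> {}" for N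
  proof -
    have "nat (n + 1 + int N) = Suc (nat (n + int N))" if "n \<ge> -int N" for n
      using that by linarith
    then have "(\<lambda>n. (f ^^ nat (n + int N)) a) \<in> C N" for a
      unfolding C_def by simp
    then show ?thesis
      by blast
  qed
  have decreasing: "M \<le> N \<Longrightarrow> C N \<subseteq> C M" for M N
    unfolding C_def by auto
  have finite_intersection: "\<Inter>(C ` J) \<noteq> {}" if "finite J" for J
  proof -
    have "C (Max (insert 0 J)) \<subseteq> \<Inter>(C ` J)"
      using that by (intro INT_greatest decreasing) simp
    then show ?thesis
      using nonempty by blast
  qed
  have "UNIV \<inter> \<Inter>(range C) \<noteq> {}"
    by (rule compact_imp_fip_image[OF compact_UNIV_fun[OF assms(1)]]) (simp_all add: closed finite_intersection)
  moreover have "\<Inter>(range C) \<subseteq> orbits f"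
  proof
    fix x
    assume "x \<in> \<Inter>(range C)"
    then have "x \<in> C (nat (- n))" for n
      by blast
    moreover have "- int (nat (- n)) \<le> n" for n
      by simp
    ultimately have "f (x n) = x (n + 1)" for n
      unfolding C_def by blast
    then show "x \<in> orbits f"
      unfolding orbits_def by simp
  qed
  ultimately show ?thesis
    by blast
qed

context
  assumes compact_UNIV: "compact (UNIV :: 'a::metric_space set)"
begin

lemma d1_uniformly_continuous:
  fixes g :: "(int \<Rightarrow> 'a) \<Rightarrow> 'b::real_normed_vector"
  assumes "d1_continuous_on UNIV g" and "e > 0"
  obtains \<delta> where "\<delta> > 0" "\<And>x y. d1 x y < \<delta> \<Longrightarrow> norm (g y - g x) < e"
proof -
  note bounded = compact_imp_bounded[OF compact_UNIV]
  have "\<exists>\<delta>>0. \<forall>x y. d1 x y < \<delta> \<longrightarrow> dist (g x) (g y) < e"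
    by (rule uniform_continuity_wrt_separating_function[OF compact_UNIV_fun[OF compact_UNIV]
          continuous_on_d1[OF bounded] d1_nonneg d1_eq_0_iff[OF bounded, THEN iffD1]
          continuous_on_if_d1_continuous[OF bounded assms(1)] assms(2)])
  then show thesis
    using that by (auto simp: dist_norm norm_minus_commute)
qed

lemma d1_continuous_bounded:
  fixes g :: "(int \<Rightarrow> 'a) \<Rightarrow> 'b::real_normed_vector"
  assumes "d1_continuous_on UNIV g"
  obtains B where "\<And>y. norm (g y) \<le> B"
proof -
  have "compact (range g)"
    by (rule compact_continuous_image[OF continuous_on_if_d1_continuous compact_UNIV_fun])
       (use assms compact_UNIV compact_imp_bounded in auto)
  then show thesis
    using that by (metis compact_imp_bounded bounded_iff rangeI)
qed

end

section \<open>Measurability of \<open>d1\<close>-continuous functions\<close>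

text \<open>
  The space \<open>'a\<close> need not be second countable, so Borel sets of \<open>int \<Rightarrow> 'a\<close> need not be
  product-measurable. Instead, a \<open>d1\<close>-continuous function is approximated pointwise by its
  composition with maps that keep finitely many coordinates, quantized to finitely many values.
\<close>

lemma borel_measurable_quantized_coordinates:
  fixes q :: "'a \<Rightarrow> 'a" and g :: "('i \<Rightarrow> 'a) \<Rightarrow> 'b::topological_space"
  assumes "finite I" and "finite (range q)" and q_measurable [measurable]: "q \<in> measurable \<mu> (count_space UNIV)"
  shows "(\<lambda>y. g (\<lambda>n. if n \<in> I then q (y n) else c)) \<in> borel_measurable (PiM UNIV (\<lambda>_. \<mu>))"
proof -
  let ?P = "PiM UNIV (\<lambda>_::'i. \<mu>)" and ?A = "\<lambda>y n. if n \<in> I then q (y n) else c"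
  define S where "S = {v. \<forall>n. (n \<in> I \<longrightarrow> v n \<in> range q) \<and> (n \<notin> I \<longrightarrow> v n = c)}"
  have "finite S"
    unfolding S_def by (rule finite_set_of_finite_funs) fact+
  have "?A \<in> measurable ?P (count_space S)"
    unfolding measurable_count_space_eq2[OF \<open>finite S\<close>]
  proof (intro conjI ballI)
    show "?A \<in> space ?P \<rightarrow> S"
      by (auto simp: S_def)
    fix v
    assume "v \<in> S"
    then have "?A -` {v} \<inter> space ?P = {y \<in> space ?P. \<forall>n\<in>I. q (y n) = v n}"
      by (auto simp: S_def fun_eq_iff)
    moreover have "{y \<in> space ?P. \<forall>n\<in>I. q (y n) = v n} \<in> sets ?P"
      using \<open>finite I\<close> by measurable
    ultimately show "?A -` {v} \<inter> space ?P \<in> sets ?P"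
      by simp
  qed
  then show ?thesis
    by (rule measurable_compose) simp
qed

context
  assumes compact_UNIV: "compact (UNIV :: 'a::metric_space set)"
begin

lemma finite_valued_approximation:
  fixes \<mu> :: "'a measure" and \<delta> :: real
  assumes "sets \<mu> = sets borel" and "\<delta> > 0"
  obtains q :: "'a \<Rightarrow> 'a" where "finite (range q)" "q \<in> measurable \<mu> (count_space UNIV)"
    "\<And>a. dist a (q a) < \<delta>"
proof -
  have "UNIV \<subseteq> (\<Union>c::'a. ball c \<delta>)"
    using centre_in_ball[of _ \<delta>] \<open>\<delta> > 0\<close> by blast
  then obtain C :: "'a set" where "finite C" and cover: "UNIV \<subseteq> (\<Union>c\<in>C. ball c \<delta>)"
    by (rule compactE_image[OF compact_UNIV, rotated]) auto
  then obtain cs where cs: "set cs = C"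
    using finite_list by blast
  define i where "i a = (LEAST i. dist a (cs ! i) < \<delta>)" for a
  define q where "q a = cs ! i a" for a
  have "dist a (q a) < \<delta> \<and> q a \<in> C" for a
  proof -
    obtain j where "j < length cs" "dist a (cs ! j) < \<delta>"
      using cover cs by (force simp: in_set_conv_nth dist_commute)
    moreover from this(2) have "i a \<le> j"
      unfolding i_def by (rule Least_le)
    ultimately show ?thesis
      unfolding q_def i_def using cs by (auto intro: LeastI)
  qed
  moreover have "q \<in> measurable \<mu> (count_space UNIV)"
  proof -
    have "{a \<in> space \<mu>. dist a (cs ! j) < \<delta>} \<in> sets \<mu>" for j
      using sets_eq_imp_space_eq[OF assms(1)] assms(1) open_ball[of "cs ! j" \<delta>]
      by (simp add: ball_def dist_commute)
    then have "i \<in> measurable \<mu> (count_space UNIV)"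
      unfolding i_def by (intro measurable_Least) (simp add: pred_def)
    then show ?thesis
      unfolding q_def by simp
  qed
  moreover have "finite (range q)"
    using \<open>finite C\<close> calculation(1) by (auto intro: finite_subset)
  ultimately show thesis
    using that by blast
qed

lemma d1_quantized_approximation:
  fixes \<mu> :: "'a measure"
  assumes "sets \<mu> = sets borel" and "e > 0"
  obtains I q where "finite I" "finite (range q)" "q \<in> measurable \<mu> (count_space UNIV)"
    "\<And>y. d1 y (\<lambda>n. if n \<in> I then q (y n) else undefined) < e"
proof -
  obtain I \<delta> where "finite I" "\<delta> > 0"
    and small: "\<And>x y :: int \<Rightarrow> 'a. (\<forall>n\<in>I. dist (x n) (y n) < \<delta>) \<Longrightarrow> d1 x y < e"
    using d1_less_if_close_on_finite[OF compact_imp_bounded[OF compact_UNIV] \<open>e > 0\<close>] by metis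
  obtain q where "finite (range q)" "q \<in> measurable \<mu> (count_space UNIV)" "\<And>a. dist a (q a) < \<delta>"
    using finite_valued_approximation[OF assms(1) \<open>\<delta> > 0\<close>] by metis
  then show thesis
    using that \<open>finite I\<close> small by simp
qed

lemma borel_measurable_if_d1_continuous:
  fixes g :: "(int \<Rightarrow> 'a) \<Rightarrow> 'b::real_normed_vector" and \<mu> :: "'a measure"
  assumes "sets \<mu> = sets borel" and g: "d1_continuous_on UNIV g"
  shows "g \<in> borel_measurable (PiM UNIV (\<lambda>_. \<mu>))"
proof -
  define approx where "approx k I q \<longleftrightarrow> finite I \<and> finite (range q) \<and> q \<in> measurable \<mu> (count_space UNIV)
      \<and> (\<forall>y. d1 y (\<lambda>n. if n \<in> I then q (y n) else undefined) < inverse (real (Suc k)))"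
    for k :: nat and I :: "int set" and q :: "'a \<Rightarrow> 'a"
  have "\<exists>I q. approx k I q" for k
  proof -
    have "inverse (real (Suc k)) > 0"
      by simp
    then obtain I q where "approx k I q"
      unfolding approx_def by (rule d1_quantized_approximation[OF assms(1)]) blast
    then show ?thesis
      by blast
  qed
  then obtain I q where approx: "\<And>k. approx k (I k) (q k)"
    by metis
  let ?A = "\<lambda>k y n. if n \<in> I k then q k (y n) else undefined"
  show ?thesis
  proof (rule borel_measurable_LIMSEQ_metric)
    show "(\<lambda>y. g (?A k y)) \<in> borel_measurable (PiM UNIV (\<lambda>_. \<mu>))" for k
      using approx[of k] unfolding approx_def by (intro borel_measurable_quantized_coordinates) auto
    fix y :: "int \<Rightarrow> 'a"
    show "(\<lambda>k. g (?A k y)) \<longlonglongrightarrow> g y"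
    proof (rule tendstoI)
      fix e :: real
      assume "e > 0"
      then obtain \<delta> where "\<delta> > 0" and \<delta>: "\<And>x. d1 y x < \<delta> \<Longrightarrow> norm (g x - g y) < e"
        using g unfolding d1_continuous_on_def by blast
      then obtain N where N: "inverse (real (Suc N)) < \<delta>"
        using reals_Archimedean by blast
      have "dist (g (?A k y)) (g y) < e" if "k \<ge> N" for k
      proof -
        have "inverse (real (Suc k)) \<le> inverse (real (Suc N))"
          using that by (simp add: le_imp_inverse_le)
        then have "d1 y (?A k y) < \<delta>"
          using approx[of k] N unfolding approx_def by (meson le_less_trans less_trans)
        then show ?thesis
          using \<delta> by (simp add: dist_norm)
      qed
      then show "\<forall>\<^sub>F k in sequentially. dist (g (?A k y)) (g y) < e"
        unfolding eventually_sequentially by blast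
    qed
  qed
qed

end

section \<open>Bump functions\<close>

lemma support_bound_if_closure_in_unit_interval:
  fixes \<rho> :: "real \<Rightarrow> real"
  assumes "closure {t. \<rho> t \<noteq> 0} \<subseteq> {-1<..<1}"
  obtains c where "c < 1" "\<And>t. \<rho> t \<noteq> 0 \<Longrightarrow> \<bar>t\<bar> \<le> c"
proof -
  let ?S = "insert 0 (closure {t. \<rho> t \<noteq> 0})"
  have "bounded ?S"
    using bounded_subset[OF bounded_Ioo assms] by simp
  then have "compact ?S"
    by (simp add: compact_eq_bounded_closed)
  then have "compact ((\<lambda>t. \<bar>t\<bar>) ` ?S)"
    by (intro compact_continuous_image continuous_on_rabs continuous_on_id)
  moreover have "(\<lambda>t. \<bar>t\<bar>) ` ?S \<noteq> {}"
    by simp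
  ultimately obtain c where "c \<in> (\<lambda>t. \<bar>t\<bar>) ` ?S" and c_max: "\<forall>d \<in> (\<lambda>t. \<bar>t\<bar>) ` ?S. d \<le> c"
    by (metis compact_attains_sup)
  then obtain t where "t \<in> ?S" "c = \<bar>t\<bar>"
    by blast
  moreover have "?S \<subseteq> {-1<..<1}"
    using assms by simp
  ultimately have "c < 1"
    by (auto simp: abs_less_iff)
  moreover have "\<bar>t\<bar> \<le> c" if "\<rho> t \<noteq> 0" for t
    using c_max closure_subset[of "{t. \<rho> t \<noteq> 0}"] that by auto
  ultimately show thesis
    by (rule that)
qed

lemma lipschitz_if_smooth_bounded_support:
  fixes \<rho> :: "real \<Rightarrow> real"
  assumes "smooth_real \<rho>" and "bounded {t. \<rho> t \<noteq> 0}"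
  obtains K where "K-lipschitz_on UNIV \<rho>"
proof -
  obtain D where D0: "D 0 = \<rho>" and D: "\<And>k x. (D k has_real_derivative D (Suc k) x) (at x)"
    using assms(1) unfolding smooth_real_def by blast
  have deriv: "(\<rho> has_real_derivative D 1 x) (at x)" for x
    using D[of 0 x] D0 by simp
  obtain R where R: "\<And>t. \<rho> t \<noteq> 0 \<Longrightarrow> \<bar>t\<bar> \<le> R"
    using assms(2) unfolding bounded_pos by auto
  have outside: "D 1 t = 0" if "R < \<bar>t\<bar>" for t
  proof -
    have "open {s. R < \<bar>s\<bar>}"
      by (intro open_Collect_less continuous_on_const continuous_on_rabs continuous_on_id)
    moreover have "0 = \<rho> s" if "s \<in> {s. R < \<bar>s\<bar>}" for s
      using R[of s] that by fastforce
    ultimately have "(\<rho> has_real_derivative 0) (at t)"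
      using \<open>R < \<bar>t\<bar>\<close> by (intro has_field_derivative_transform_within_open[OF DERIV_const]) auto
    then show ?thesis
      using deriv DERIV_unique by blast
  qed
  have "continuous_on (cball 0 R) (D 1)"
    using D by (intro continuous_at_imp_continuous_on ballI DERIV_isCont) blast
  then have "bounded (D 1 ` cball 0 R)"
    by (intro compact_imp_bounded compact_continuous_image compact_cball)
  then obtain K where "K > 0" and inside: "\<And>t. t \<in> cball 0 R \<Longrightarrow> \<bar>D 1 t\<bar> \<le> K"
    unfolding bounded_pos by auto
  have "\<bar>D 1 t\<bar> \<le> K" for t
    using inside[of t] outside[of t] \<open>K > 0\<close> by (cases "\<bar>t\<bar> \<le> R") auto
  then have "K-lipschitz_on UNIV \<rho>"
    using deriv \<open>K > 0\<close>
    by (intro bounded_derivative_imp_lipschitz[where f' = "\<lambda>x h. D 1 x * h"])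
       (auto simp: has_field_derivative_def abs_mult intro!: onorm_le mult_right_mono)
  then show thesis
    by (rule that)
qed

section \<open>Kernel smoothing\<close>

locale kernel_smoothing =
  fixes \<mu> :: "'a::metric_space measure" and \<rho> :: "real \<Rightarrow> real" and K :: real
  assumes compact_UNIV: "compact (UNIV :: 'a set)"
    and sets_\<mu>: "sets \<mu> = sets borel"
    and prob_space_\<mu>: "prob_space \<mu>"
    and emeasure_ball_pos: "\<And>x e. e > 0 \<Longrightarrow> emeasure \<mu> (ball x e) > 0"
    and \<rho>_lipschitz: "K-lipschitz_on UNIV \<rho>"
    and \<rho>_nonneg: "\<And>t. 0 \<le> \<rho> t"
    and \<rho>_0_pos: "0 < \<rho> 0"
    and \<rho>_support: "closure {t. \<rho> t \<noteq> 0} \<subseteq> {-1<..<1}"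
begin

abbreviation \<mu>Z :: "(int \<Rightarrow> 'a) measure" where
  "\<mu>Z \<equiv> PiM UNIV (\<lambda>_. \<mu>)"

sublocale \<mu>Z: prob_space \<mu>Z
proof -
  have "product_prob_space (\<lambda>_::int. \<mu>)"
    unfolding product_prob_space_def product_prob_space_axioms_def product_sigma_finite_def
    using prob_space_\<mu> prob_space_imp_sigma_finite by blast
  then interpret product_prob_space "\<lambda>_::int. \<mu>" UNIV .
  show "prob_space \<mu>Z"
    by (rule P.prob_space_axioms)
qed

lemma space_\<mu>Z [simp]: "space \<mu>Z = UNIV"
  using sets_eq_imp_space_eq[OF sets_\<mu>] by (simp add: space_PiM)

lemma \<rho>_vanishes:
  assumes "1 \<le> \<bar>t\<bar>"
  shows "\<rho> t = 0"
proof (rule ccontr)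
  assume "\<rho> t \<noteq> 0"
  then have "t \<in> closure {t. \<rho> t \<noteq> 0}"
    by (intro subsetD[OF closure_subset]) simp
  then have "-1 < t \<and> t < 1"
    using \<rho>_support by auto
  then show False
    using assms by arith
qed

lemma \<rho>_bounded: "\<rho> t \<le> 2 * K"
proof -
  have "K \<ge> 0"
    by (rule lipschitz_on_nonneg[OF \<rho>_lipschitz])
  show ?thesis
  proof (cases "\<bar>t\<bar> < 1")
    case True
    have "\<rho> t \<le> \<bar>\<rho> t - \<rho> 1\<bar>"
      using \<rho>_vanishes[of 1] by simp
    also have "\<dots> \<le> K * \<bar>t - 1\<bar>"
      using lipschitz_onD[OF \<rho>_lipschitz, of t 1] by (simp add: dist_real_def)
    also have "\<dots> \<le> K * 2"
      using True \<open>K \<ge> 0\<close> by (intro mult_left_mono) arith+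
    finally show ?thesis
      by simp
  next
    case False
    then have "\<rho> t = 0"
      by (intro \<rho>_vanishes) simp
    then show ?thesis
      using \<open>K \<ge> 0\<close> by simp
  qed
qed

lemma kernel_measurable [measurable]: "(\<lambda>y. \<rho> (d1 x y / r)) \<in> borel_measurable \<mu>Z"
proof -
  have [measurable]: "\<rho> \<in> borel_measurable borel"
    by (rule borel_measurable_continuous_onI[OF lipschitz_on_continuous_on[OF \<rho>_lipschitz]])
  have "norm (d1 x a - d1 x b) \<le> 1 * d1 a b" for a b
    using abs_d1_diff_le[OF compact_imp_bounded[OF compact_UNIV], of a x b] by (simp add: d1_commute[of x])
  then have [measurable]: "d1 x \<in> borel_measurable \<mu>Z"
    by (intro borel_measurable_if_d1_continuous[OF compact_UNIV sets_\<mu>] d1_continuous_on_if_d1_lipschitz)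
  show ?thesis
    by measurable
qed

lemma integrable_kernel:
  fixes g :: "(int \<Rightarrow> 'a) \<Rightarrow> 'b::{banach,second_countable_topology}"
  assumes "g \<in> borel_measurable \<mu>Z" and "\<And>y. norm (g y) \<le> B"
  shows "integrable \<mu>Z (\<lambda>y. \<rho> (d1 x y / r) *\<^sub>R g y)"
proof (rule \<mu>Z.integrable_const_bound[where B = "2 * K * B"])
  have "\<rho> (d1 x y / r) * norm (g y) \<le> 2 * K * B" for y
    using assms(2) \<rho>_bounded \<rho>_nonneg order_trans[OF \<rho>_nonneg \<rho>_bounded] by (intro mult_mono) auto
  then show "AE y in \<mu>Z. norm (\<rho> (d1 x y / r) *\<^sub>R g y) \<le> 2 * K * B"
    by (simp add: abs_of_nonneg \<rho>_nonneg)
qed (use assms(1) in measurable)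

lemma smoothing_one_pos:
  assumes "r > 0"
  shows "0 < smoothing \<mu> \<rho> r (\<lambda>_. 1::real) x"
proof -
  have "K \<ge> 0"
    by (rule lipschitz_on_nonneg[OF \<rho>_lipschitz])
  define \<eta> where "\<eta> = \<rho> 0 / (2 * (K + 1))"
  have "\<eta> * r > 0"
    using \<rho>_0_pos \<open>K \<ge> 0\<close> \<open>r > 0\<close> by (simp add: \<eta>_def)
  have near_0: "\<rho> 0 / 2 < \<rho> t" if "\<bar>t\<bar> < \<eta>" for t
  proof -
    have "\<rho> 0 - \<rho> t \<le> K * \<bar>t\<bar>"
      using lipschitz_onD[OF \<rho>_lipschitz, of 0 t] by (simp add: dist_real_def)
    also have "\<dots> \<le> K * \<eta>"
      using that \<open>K \<ge> 0\<close> by (intro mult_left_mono) auto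
    also have "\<dots> < \<rho> 0 / 2"
      using \<rho>_0_pos \<open>K \<ge> 0\<close> by (simp add: \<eta>_def field_simps)
    finally show ?thesis
      by simp
  qed
  txt \<open>The kernel exceeds \<open>\<rho> 0 / 2\<close> on a cylinder set \<open>C\<close> around \<open>x\<close> of positive measure.\<close>
  obtain I \<delta> where "finite I" "\<delta> > 0"
    and close: "\<And>y. \<forall>n\<in>I. dist (x n) (y n) < \<delta> \<Longrightarrow> d1 x y < \<eta> * r"
    using d1_less_if_close_on_finite[OF compact_imp_bounded[OF compact_UNIV] \<open>\<eta> * r > 0\<close>] by metis
  define C where "C = prod_emb UNIV (\<lambda>_. \<mu>) I (PiE I (\<lambda>n. ball (x n) \<delta>))"
  have "C \<in> sets \<mu>Z"
    unfolding C_def by (rule sets_PiM_I) (use \<open>finite I\<close> sets_\<mu> in auto)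
  have "emeasure \<mu>Z C = (\<Prod>n\<in>I. emeasure \<mu> (ball (x n) \<delta>))"
    unfolding C_def by (rule emeasure_PiM_emb) (use prob_space_\<mu> \<open>finite I\<close> sets_\<mu> in auto)
  also have "\<dots> \<noteq> 0"
    using emeasure_ball_pos[OF \<open>\<delta> > 0\<close>] \<open>finite I\<close> by (simp add: prod_zero_iff order_less_imp_not_eq2)
  finally have "measure \<mu>Z C > 0"
    by (simp add: \<mu>Z.emeasure_eq_measure less_le)
  have "\<rho> 0 / 2 * indicator C y \<le> \<rho> (d1 x y / r)" for y
  proof (cases "y \<in> C")
    case True
    then have "d1 x y < \<eta> * r"
      by (intro close) (simp add: C_def prod_emb_def PiE_iff)
    then have "\<bar>d1 x y / r\<bar> < \<eta>"
      using \<open>r > 0\<close> d1_nonneg[of x y] by (simp add: field_simps)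
    then show ?thesis
      using True near_0[of "d1 x y / r"] by simp
  qed (simp add: \<rho>_nonneg)
  moreover have "integrable \<mu>Z (\<lambda>y. \<rho> 0 / 2 * indicator C y)"
    by (rule \<mu>Z.integrable_const_bound[where B = "\<rho> 0 / 2"])
       (use \<open>C \<in> sets \<mu>Z\<close> \<rho>_0_pos in \<open>auto simp: indicator_def\<close>)
  ultimately have "(\<integral>y. \<rho> 0 / 2 * indicator C y \<partial>\<mu>Z) \<le> (\<integral>y. \<rho> (d1 x y / r) \<partial>\<mu>Z)"
    using integrable_kernel[of "\<lambda>_. 1::real" 1 x r] by (intro integral_mono) simp_all
  moreover have "(\<integral>y. \<rho> 0 / 2 * indicator C y \<partial>\<mu>Z) = \<rho> 0 / 2 * measure \<mu>Z C"
    using \<open>C \<in> sets \<mu>Z\<close> by simp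
  moreover have "0 < \<rho> 0 / 2 * measure \<mu>Z C"
    using \<rho>_0_pos \<open>measure \<mu>Z C > 0\<close> by simp
  ultimately show ?thesis
    unfolding smoothing_def by simp
qed

lemma norm_smoothing_diff_le:
  fixes g :: "(int \<Rightarrow> 'a) \<Rightarrow> 'b::{banach,second_countable_topology}"
  assumes g: "g \<in> borel_measurable \<mu>Z" "\<And>y. norm (g y) \<le> B" and "r > 0"
  shows "norm (smoothing \<mu> \<rho> r g x - smoothing \<mu> \<rho> r g x') \<le> K * B / r * d1 x x'"
proof -
  let ?h = "\<lambda>y. \<rho> (d1 x y / r) *\<^sub>R g y - \<rho> (d1 x' y / r) *\<^sub>R g y"
  have int: "integrable \<mu>Z ?h"
    using integrable_kernel[OF g] by simp
  have "norm (?h y) \<le> K * B / r * d1 x x'" for y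
  proof -
    have "norm (?h y) = \<bar>\<rho> (d1 x y / r) - \<rho> (d1 x' y / r)\<bar> * norm (g y)"
      by (simp add: scaleR_left_diff_distrib[symmetric])
    also have "\<dots> \<le> (K * \<bar>d1 x y / r - d1 x' y / r\<bar>) * B"
      using lipschitz_onD[OF \<rho>_lipschitz] g(2) lipschitz_on_nonneg[OF \<rho>_lipschitz]
      by (intro mult_mono) (auto simp: dist_real_def)
    also have "\<dots> = K * B / r * \<bar>d1 x y - d1 x' y\<bar>"
      using \<open>r > 0\<close> by (simp only: diff_divide_distrib[symmetric] abs_divide abs_of_pos) simp
    also have "\<dots> \<le> K * B / r * d1 x x'"
      using abs_d1_diff_le[OF compact_imp_bounded[OF compact_UNIV]] lipschitz_on_nonneg[OF \<rho>_lipschitz]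
        order_trans[OF norm_ge_zero g(2)] \<open>r > 0\<close>
      by (intro mult_left_mono) simp_all
    finally show ?thesis .
  qed
  then have "(\<integral>y. norm (?h y) \<partial>\<mu>Z) \<le> K * B / r * d1 x x'"
    by (intro \<mu>Z.integral_le_const integrable_norm[OF int] AE_I2)
  then have "norm (\<integral>y. ?h y \<partial>\<mu>Z) \<le> K * B / r * d1 x x'"
    by (rule order_trans[OF integral_norm_bound])
  then show ?thesis
    unfolding smoothing_def using integrable_kernel[OF g] by (simp add: Bochner_Integration.integral_diff)
qed

lemma norm_normalized_smoothing_diff_le:
  fixes g :: "(int \<Rightarrow> 'a) \<Rightarrow> 'b::{banach,second_countable_topology}"
  assumes g: "g \<in> borel_measurable \<mu>Z" "\<And>y. norm (g y) \<le> B" and "r > 0"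
    and close: "\<And>y. d1 x y < r \<Longrightarrow> norm (g y - g x) \<le> \<eta>"
  shows "norm (smoothing \<mu> \<rho> r g x /\<^sub>R smoothing \<mu> \<rho> r (\<lambda>_. 1::real) x - g x) \<le> \<eta>"
proof -
  define N where "N = smoothing \<mu> \<rho> r (\<lambda>_. 1::real) x"
  have "N > 0"
    unfolding N_def by (rule smoothing_one_pos[OF \<open>r > 0\<close>])
  have N_eq: "N = (\<integral>y. \<rho> (d1 x y / r) \<partial>\<mu>Z)"
    by (simp add: N_def smoothing_def)
  have int_const: "integrable \<mu>Z (\<lambda>y. \<rho> (d1 x y / r) *\<^sub>R g x)"
    by (rule integrable_kernel[of _ "norm (g x)"]) simp_all
  have int_diff: "integrable \<mu>Z (\<lambda>y. \<rho> (d1 x y / r) *\<^sub>R (g y - g x))"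
    using g by (intro integrable_kernel[of _ "B + norm (g x)"]) (auto intro: norm_triangle_le_diff add_mono)
  have "N *\<^sub>R g x = (\<integral>y. \<rho> (d1 x y / r) *\<^sub>R g x \<partial>\<mu>Z)"
    unfolding N_eq using integrable_kernel[of "\<lambda>_. 1::real" 1 x r]
    by (intro integral_scaleR_left[symmetric]) simp
  then have "smoothing \<mu> \<rho> r g x - N *\<^sub>R g x = (\<integral>y. \<rho> (d1 x y / r) *\<^sub>R (g y - g x) \<partial>\<mu>Z)"
    unfolding smoothing_def scaleR_right_diff_distrib
    using integrable_kernel[OF g] int_const by (simp add: Bochner_Integration.integral_diff)
  also have "norm \<dots> \<le> (\<integral>y. \<eta> * \<rho> (d1 x y / r) \<partial>\<mu>Z)"
  proof (rule order_trans[OF integral_norm_bound integral_mono])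
    show "integrable \<mu>Z (\<lambda>y. norm (\<rho> (d1 x y / r) *\<^sub>R (g y - g x)))"
      using int_diff by (rule integrable_norm)
    show "integrable \<mu>Z (\<lambda>y. \<eta> * \<rho> (d1 x y / r))"
      using integrable_kernel[of "\<lambda>_. 1::real" 1 x r] by simp
    fix y
    show "norm (\<rho> (d1 x y / r) *\<^sub>R (g y - g x)) \<le> \<eta> * \<rho> (d1 x y / r)"
    proof (cases "d1 x y < r")
      case True
      have "norm (\<rho> (d1 x y / r) *\<^sub>R (g y - g x)) = \<rho> (d1 x y / r) * norm (g y - g x)"
        by (simp add: abs_of_nonneg \<rho>_nonneg)
      also have "\<dots> \<le> \<rho> (d1 x y / r) * \<eta>"
        by (rule mult_left_mono[OF close[OF True] \<rho>_nonneg])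
      finally show ?thesis
        by (simp only: mult.commute)
    next
      case False
      then have "\<rho> (d1 x y / r) = 0"
        using \<open>r > 0\<close> d1_nonneg[of x y] by (intro \<rho>_vanishes) simp
      then show ?thesis
        by simp
    qed
  qed
  also have "\<dots> = \<eta> * N"
    by (simp add: N_eq)
  finally have bound: "norm (smoothing \<mu> \<rho> r g x - N *\<^sub>R g x) \<le> \<eta> * N" .
  have "smoothing \<mu> \<rho> r g x /\<^sub>R N - g x = inverse N *\<^sub>R (smoothing \<mu> \<rho> r g x - N *\<^sub>R g x)"
    using \<open>N > 0\<close> by (simp add: scaleR_right_diff_distrib)
  then have "norm (smoothing \<mu> \<rho> r g x /\<^sub>R N - g x) = inverse N * norm (smoothing \<mu> \<rho> r g x - N *\<^sub>R g x)"
    using \<open>N > 0\<close> by simp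
  also have "\<dots> \<le> inverse N * (\<eta> * N)"
    using bound \<open>N > 0\<close> by (intro mult_left_mono) auto
  also have "\<dots> = \<eta>"
    using \<open>N > 0\<close> by simp
  finally show ?thesis
    unfolding N_def .
qed

text \<open>\<open>S \<noteq> {}\<close> is needed because the supremum of the empty set of reals is unspecified.\<close>

lemma tendsto_normalized_smoothing:
  fixes g :: "(int \<Rightarrow> 'a) \<Rightarrow> 'b::{banach,second_countable_topology}"
  assumes "S \<noteq> {}" and g: "d1_continuous_on UNIV g"
  shows "((\<lambda>s. SUP x\<in>S. norm (smoothing \<mu> \<rho> s g x /\<^sub>R smoothing \<mu> \<rho> s (\<lambda>_. 1::real) x - g x))
           \<longlongrightarrow> 0) (at_right 0)"
proof (rule tendstoI)
  fix e :: real
  assume "e > 0"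
  then obtain \<delta> where "\<delta> > 0" and \<delta>: "\<And>x y. d1 x y < \<delta> \<Longrightarrow> norm (g y - g x) < e / 2"
    using d1_uniformly_continuous[OF compact_UNIV g, of "e / 2"] by auto
  obtain B where "\<And>y. norm (g y) \<le> B"
    using d1_continuous_bounded[OF compact_UNIV g] by metis
  have g_measurable: "g \<in> borel_measurable \<mu>Z"
    by (rule borel_measurable_if_d1_continuous[OF compact_UNIV sets_\<mu> g])
  have "dist (SUP x\<in>S. norm (smoothing \<mu> \<rho> s g x /\<^sub>R smoothing \<mu> \<rho> s (\<lambda>_. 1::real) x - g x)) 0 < e"
    if "0 < s" "s < \<delta>" for s
  proof -
    let ?err = "\<lambda>x. norm (smoothing \<mu> \<rho> s g x /\<^sub>R smoothing \<mu> \<rho> s (\<lambda>_. 1::real) x - g x)"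
    have err_le: "?err x \<le> e / 2" for x
      using g_measurable \<open>\<And>y. norm (g y) \<le> B\<close> \<open>0 < s\<close>
    proof (rule norm_normalized_smoothing_diff_le)
      show "norm (g y - g x) \<le> e / 2" if "d1 x y < s" for y
        using \<delta> that \<open>s < \<delta>\<close> by (simp add: less_imp_le)
    qed
    have "(SUP x\<in>S. ?err x) \<le> e / 2"
      using \<open>S \<noteq> {}\<close> err_le by (rule cSUP_least)
    moreover obtain x where "x \<in> S"
      using \<open>S \<noteq> {}\<close> by blast
    then have "?err x \<le> (SUP x\<in>S. ?err x)"
      using err_le by (intro cSUP_upper bdd_aboveI2)
    then have "0 \<le> (SUP x\<in>S. ?err x)"
      by (rule order_trans[OF norm_ge_zero])
    ultimately show ?thesis
      using \<open>e > 0\<close> by (simp add: dist_real_def)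
  qed
  then show "\<forall>\<^sub>F s in at_right 0.
      dist (SUP x\<in>S. norm (smoothing \<mu> \<rho> s g x /\<^sub>R smoothing \<mu> \<rho> s (\<lambda>_. 1::real) x - g x)) 0 < e"
    unfolding eventually_at_right_field using \<open>\<delta> > 0\<close> by blast
qed

lemma d1_support_smoothing_subset:
  fixes g :: "(int \<Rightarrow> 'a) \<Rightarrow> 'b::{banach,second_countable_topology}"
  assumes "r > 0"
  shows "d1_support (smoothing \<mu> \<rho> r g) S \<subseteq> d1_nbhd (d1_support g UNIV) r"
proof
  fix x
  assume "x \<in> d1_support (smoothing \<mu> \<rho> r g) S"
  then have near: "\<And>e. e > 0 \<Longrightarrow> \<exists>y\<in>S. smoothing \<mu> \<rho> r g y \<noteq> 0 \<and> d1 x y < e"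
    unfolding d1_support_def by blast
  obtain c where "c < 1" and c: "\<And>t. \<rho> t \<noteq> 0 \<Longrightarrow> \<bar>t\<bar> \<le> c"
    using support_bound_if_closure_in_unit_interval[OF \<rho>_support] by blast
  obtain y where "smoothing \<mu> \<rho> r g y \<noteq> 0" and "d1 x y < (1 - c) * r"
    using near[of "(1 - c) * r"] \<open>c < 1\<close> \<open>r > 0\<close> by auto
  have "\<exists>z. \<rho> (d1 y z / r) *\<^sub>R g z \<noteq> 0"
  proof (rule ccontr)
    assume "\<nexists>z. \<rho> (d1 y z / r) *\<^sub>R g z \<noteq> 0"
    then have "(\<lambda>z. \<rho> (d1 y z / r) *\<^sub>R g z) = (\<lambda>_. 0)"
      by auto
    then have "smoothing \<mu> \<rho> r g y = 0"
      unfolding smoothing_def by simp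
    then show False
      using \<open>smoothing \<mu> \<rho> r g y \<noteq> 0\<close> by contradiction
  qed
  then obtain z where "\<rho> (d1 y z / r) \<noteq> 0" and "g z \<noteq> 0"
    by auto
  then have "d1 y z \<le> c * r"
    using c[of "d1 y z / r"] \<open>r > 0\<close> d1_nonneg[of y z] by (simp add: field_simps)
  then have "d1 x z < r"
    using d1_triangle[OF compact_imp_bounded[OF compact_UNIV], of x z y] \<open>d1 x y < (1 - c) * r\<close>
    by (simp add: algebra_simps)
  moreover have "z \<in> d1_support g UNIV"
    unfolding d1_support_def using \<open>g z \<noteq> 0\<close> by force
  ultimately show "x \<in> d1_nbhd (d1_support g UNIV) r"
    unfolding d1_nbhd_def by blast
qed

end

theorem lemma4:
  fixes f :: "'a::metric_space \<Rightarrow> 'a"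
    and \<mu> :: "'a measure"
    and \<phi> \<phi>t :: "(int \<Rightarrow> 'a) \<Rightarrow> real ^ 'n"
    and \<rho> :: "real \<Rightarrow> real"
    and r :: real
  assumes M_compact: "compact (UNIV :: 'a set)"
    and f_cont: "continuous_on UNIV f"
    and \<phi>_cont: "d1_continuous_on (orbits f) \<phi>"
    and \<phi>t_cont: "d1_continuous_on UNIV \<phi>t"
    and \<phi>t_ext: "\<forall>x\<in>orbits f. \<phi>t x = \<phi> x"
    and \<rho>_smooth: "smooth_real \<rho>"
    and \<rho>_nonneg: "\<forall>t. 0 \<le> \<rho> t"
    and \<rho>_supp: "closure {t. \<rho> t \<noteq> 0} \<subseteq> {-1<..<1}"
    and \<rho>_0: "\<rho> 0 > 0"
    and \<mu>_borel: "sets \<mu> = sets borel"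
    and \<mu>_prob: "prob_space \<mu>"
    and \<mu>_full: "\<forall>x e. e > 0 \<longrightarrow> emeasure \<mu> (ball x e) > 0"
    and r_pos: "r > 0"
  shows
    "(\<forall>x\<in>orbits f.
        integrable (PiM UNIV (\<lambda>_. \<mu>)) (\<lambda>y. \<rho> (d1 x y / r) *\<^sub>R \<phi>t y)
      \<and> integrable (PiM UNIV (\<lambda>_. \<mu>)) (\<lambda>y. \<rho> (d1 x y / r) *\<^sub>R (1::real))
      \<and> smoothing \<mu> \<rho> r (\<lambda>_. 1::real) x > 0)
   \<and> d1_continuous_on (orbits f) (smoothing \<mu> \<rho> r \<phi>t)
   \<and> (\<exists>L. \<forall>x\<in>orbits f. \<forall>y\<in>orbits f.
         norm (smoothing \<mu> \<rho> r \<phi>t x - smoothing \<mu> \<rho> r \<phi>t y) \<le> L * dinf x y)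
   \<and> ((\<lambda>s. SUP x\<in>orbits f. norm (smoothing \<mu> \<rho> s \<phi>t x /\<^sub>R smoothing \<mu> \<rho> s (\<lambda>_. 1::real) x - \<phi>t x))
        \<longlongrightarrow> 0) (at_right 0)
   \<and> d1_support (smoothing \<mu> \<rho> r \<phi>t) (orbits f) \<subseteq> d1_nbhd (d1_support \<phi>t UNIV) r"
proof -
  txt \<open>Only the extension \<open>\<phi>t\<close> is smoothed.\<close>
  obtain K where "K-lipschitz_on UNIV \<rho>"
    using lipschitz_if_smooth_bounded_support[OF \<rho>_smooth]
      bounded_subset[OF bounded_Ioo order_trans[OF closure_subset \<rho>_supp]] by metis
  interpret kernel_smoothing \<mu> \<rho> K
    by (rule kernel_smoothing.intro)
       (simp_all add: M_compact \<mu>_borel \<mu>_prob \<mu>_full \<rho>_nonneg \<rho>_0 \<rho>_supp \<open>K-lipschitz_on UNIV \<rho>\<close>)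
  obtain B where B: "\<And>y. norm (\<phi>t y) \<le> B"
    using d1_continuous_bounded[OF M_compact \<phi>t_cont] by metis
  have \<phi>t_measurable: "\<phi>t \<in> borel_measurable \<mu>Z"
    by (rule borel_measurable_if_d1_continuous[OF M_compact \<mu>_borel \<phi>t_cont])
  have d1_lipschitz: "norm (smoothing \<mu> \<rho> r \<phi>t x - smoothing \<mu> \<rho> r \<phi>t y) \<le> K * B / r * d1 x y" for x y
    by (rule norm_smoothing_diff_le[OF \<phi>t_measurable B r_pos])
  have "integrable \<mu>Z (\<lambda>y. \<rho> (d1 x y / r) *\<^sub>R (1::real))" for x
    by (rule integrable_kernel[where B = 1]) simp_all
  then show ?thesis
    using integrable_kernel[OF \<phi>t_measurable B] smoothing_one_pos[OF r_pos]
      d1_continuous_on_if_d1_lipschitz[OF d1_lipschitz]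
      dinf_lipschitz_if_d1_lipschitz[OF compact_imp_bounded[OF M_compact] d1_lipschitz]
      tendsto_normalized_smoothing[OF orbits_nonempty[OF M_compact f_cont] \<phi>t_cont]
      d1_support_smoothing_subset[OF r_pos]
    by blast
qed

end
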